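(* Let $(V,m)$ be a discrete measure space and $(b,c)$ a graph over $(V,m)$ satisfying (FC), i.e. $\widetilde L C_c(V)\subseteq\ell^2(V,m)$. Let $L$ be a non-negative selfadjoint operator on $\ell^2(V,m)$ with associated form $Q$. Then the following are equivalent: (i) $Q$ satisfies condition (C) with respect to $(b,c)$; (ii) $L$ is a restriction of $\widetilde L$.
   Context: $V$ is a finite or countably infinite set and $m:V\to(0,\infty)$; $(V,m)$ is a discrete measure space. $C(V)$ is the set of all functions $V\to\mathbb C$, $C_c(V)$ the finitely supported ones, and $\ell^2(V,m)$ carries $\langle u,v\rangle=\sum_x u(x)\overline{v(x)}m(x)$. A graph over $(V,m)$ is a pair $(b,c)$ with $c:V\to[0,\infty)$, $b:V\times V\to[0,\infty)$, $b(x,x)=0$, $b(x,y)=b(y,x)$, $\sum_y b(x,y)<\infty$. Let $\widetilde F=\{u\in C(V):\sum_y|b(x,y)u(y)|<\infty\ \forall x\}$ and $\widetilde L u(x)=\frac{1}{m(x)}\sum_y b(x,y)(u(x)-u(y))+\frac{c(x)}{m(x)}u(x)$ for $u\in\widetilde F$. "$L$ is a restriction of $\widetilde L$" means the domain of $L$ is contained in $\widetilde F$ and $Lu=\widetilde Lu$ there. The form associated to a non-negative selfadjoint $L$ is $Q(u,v)=\langle L^{1/2}u,L^{1/2}v\rangle$ on $D(Q)=D(L^{1/2})$. A symmetric form $Q$ on $\ell^2(V,m)$ with domain $D$ satisfies condition (C) w.r.t. $(b,c)$ if: (C0) $Q$ is non-negative and closed; (C1) $C_c(V)\subseteq D$;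 (C2) for all $u\in D$ and $v\in C_c(V)$ the sum $\sum_x u(x)\overline{\widetilde L v(x)}m(x)$ converges absolutely and equals $Q(u,v)$. *)

theory Defs
  imports "HOL-Analysis.Analysis" "HOL-Library.Function_Algebras"
begin

type_synonym 'v fn = "'v \<Rightarrow> complex"

definition l2 :: "('v \<Rightarrow> real) \<Rightarrow> 'v fn set" where
  "l2 m = {u. (\<lambda>x. (cmod (u x))^2 * m x) summable_on UNIV}"

definition ip :: "('v \<Rightarrow> real) \<Rightarrow> 'v fn \<Rightarrow> 'v fn \<Rightarrow> complex" where
  "ip m u v = (\<Sum>\<^sub>\<infinity>x. u x * cnj (v x) * complex_of_real (m x))"

definition l2norm :: "('v \<Rightarrow> real) \<Rightarrow> 'v fn \<Rightarrow> real" where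
  "l2norm m u = sqrt (\<Sum>\<^sub>\<infinity>x. (cmod (u x))^2 * m x)"

definition Cc :: "'v fn set" where
  "Cc = {u. finite {x. u x \<noteq> 0}}"

definition is_graph :: "('v \<Rightarrow> 'v \<Rightarrow> real) \<Rightarrow> ('v \<Rightarrow> real) \<Rightarrow> bool" where
  "is_graph b c \<longleftrightarrow> (\<forall>x. c x \<ge> 0) \<and> (\<forall>x y. b x y \<ge> 0) \<and> (\<forall>x. b x x = 0)
     \<and> (\<forall>x y. b x y = b y x) \<and> (\<forall>x. (\<lambda>y. b x y) summable_on UNIV)"

definition Ftilde :: "('v \<Rightarrow> 'v \<Rightarrow> real) \<Rightarrow> 'v fn set" where
  "Ftilde b = {u. \<forall>x. (\<lambda>y. norm (complex_of_real (b x y) * u y)) summable_on UNIV}"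

definition Ltilde :: "('v \<Rightarrow> real) \<Rightarrow> ('v \<Rightarrow> 'v \<Rightarrow> real) \<Rightarrow> ('v \<Rightarrow> real) \<Rightarrow> 'v fn \<Rightarrow> 'v fn" where
  "Ltilde m b c u = (\<lambda>x. complex_of_real (1 / m x) *
        (\<Sum>\<^sub>\<infinity>y. complex_of_real (b x y) * (u x - u y))
      + complex_of_real (c x / m x) * u x)"

definition FC :: "('v \<Rightarrow> real) \<Rightarrow> ('v \<Rightarrow> 'v \<Rightarrow> real) \<Rightarrow> ('v \<Rightarrow> real) \<Rightarrow> bool" where
  "FC m b c \<longleftrightarrow> (\<forall>v\<in>Cc. Ltilde m b c v \<in> l2 m)"

definition linear_op :: "('v \<Rightarrow> real) \<Rightarrow> 'v fn set \<Rightarrow> ('v fn \<Rightarrow> 'v fn) \<Rightarrow> bool" where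
  "linear_op m D A \<longleftrightarrow> D \<subseteq> l2 m \<and> 0 \<in> D \<and>
     (\<forall>u\<in>D. \<forall>v\<in>D. u + v \<in> D \<and> A (u + v) = A u + A v) \<and>
     (\<forall>u\<in>D. \<forall>a::complex. (\<lambda>x. a * u x) \<in> D \<and> A (\<lambda>x. a * u x) = (\<lambda>x. a * A u x)) \<and>
     (\<forall>u\<in>D. A u \<in> l2 m)"

definition densely_defined :: "('v \<Rightarrow> real) \<Rightarrow> 'v fn set \<Rightarrow> bool" where
  "densely_defined m D \<longleftrightarrow> (\<forall>u\<in>l2 m. \<forall>e>0. \<exists>v\<in>D. l2norm m (u - v) < e)"

text \<open>Selfadjoint: densely defined, symmetric, and the domain of the adjoint is contained in D
  (so that A = A^* ).\<close>
definition selfadjoint :: "('v \<Rightarrow> real) \<Rightarrow> 'v fn set \<Rightarrow> ('v fn \<Rightarrow> 'v fn) \<Rightarrow> bool" where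
  "selfadjoint m D A \<longleftrightarrow> linear_op m D A \<and> densely_defined m D \<and>
     (\<forall>u\<in>D. \<forall>v\<in>D. ip m (A u) v = ip m u (A v)) \<and>
     (\<forall>v\<in>l2 m. (\<exists>w\<in>l2 m. \<forall>u\<in>D. ip m (A u) v = ip m u w) \<longrightarrow> v \<in> D)"

definition nonneg_op :: "('v \<Rightarrow> real) \<Rightarrow> 'v fn set \<Rightarrow> ('v fn \<Rightarrow> 'v fn) \<Rightarrow> bool" where
  "nonneg_op m D A \<longleftrightarrow> (\<forall>u\<in>D. Im (ip m (A u) u) = 0 \<and> Re (ip m (A u) u) \<ge> 0)"

text \<open>(DS,S) is the square root L^(1/2) of (D,A): the (unique) non-negative selfadjoint
  operator with S o S = A (including domains).\<close>
definition is_sqrt_op :: "('v \<Rightarrow> real) \<Rightarrow> 'v fn set \<Rightarrow> ('v fn \<Rightarrow> 'v fn)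
     \<Rightarrow> 'v fn set \<Rightarrow> ('v fn \<Rightarrow> 'v fn) \<Rightarrow> bool" where
  "is_sqrt_op m D A DS S \<longleftrightarrow> selfadjoint m DS S \<and> nonneg_op m DS S \<and>
     D = {u\<in>DS. S u \<in> DS} \<and> (\<forall>u\<in>D. A u = S (S u))"

text \<open>The form associated with L, given its square root (DS,S): Q(u,v) = <S u, S v> on DS.\<close>
definition assoc_form :: "('v \<Rightarrow> real) \<Rightarrow> ('v fn \<Rightarrow> 'v fn) \<Rightarrow> 'v fn \<Rightarrow> 'v fn \<Rightarrow> complex" where
  "assoc_form m S u v = ip m (S u) (S v)"

text \<open>Closed form: the form domain is complete for the form norm.\<close>
definition closed_form :: "('v \<Rightarrow> real) \<Rightarrow> 'v fn set \<Rightarrow> ('v fn \<Rightarrow> 'v fn \<Rightarrow> complex) \<Rightarrow> bool" where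
  "closed_form m DQ q \<longleftrightarrow> (\<forall>f u. (\<forall>n. f n \<in> DQ) \<longrightarrow> u \<in> l2 m \<longrightarrow>
      (\<lambda>n. l2norm m (f n - u)) \<longlonglongrightarrow> 0 \<longrightarrow>
      (\<forall>e>0. \<exists>N. \<forall>n\<ge>N. \<forall>k\<ge>N. Re (q (f n - f k) (f n - f k)) < e) \<longrightarrow>
      u \<in> DQ \<and> (\<lambda>n. Re (q (f n - u) (f n - u))) \<longlonglongrightarrow> 0)"

definition condition_C :: "('v \<Rightarrow> real) \<Rightarrow> ('v \<Rightarrow> 'v \<Rightarrow> real) \<Rightarrow> ('v \<Rightarrow> real)
     \<Rightarrow> 'v fn set \<Rightarrow> ('v fn \<Rightarrow> 'v fn \<Rightarrow> complex) \<Rightarrow> bool" where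
  "condition_C m b c DQ q \<longleftrightarrow>
     \<comment> \<open>(C0)\<close> (\<forall>u\<in>DQ. Im (q u u) = 0 \<and> Re (q u u) \<ge> 0) \<and> closed_form m DQ q \<and>
     \<comment> \<open>(C1)\<close> Cc \<subseteq> DQ \<and>
     \<comment> \<open>(C2)\<close> (\<forall>u\<in>DQ. \<forall>v\<in>Cc.
        (\<lambda>x. norm (u x * cnj (Ltilde m b c v x) * complex_of_real (m x))) summable_on UNIV \<and>
        (\<Sum>\<^sub>\<infinity>x. u x * cnj (Ltilde m b c v x) * complex_of_real (m x)) = q u v)"

definition restriction_of_Ltilde :: "('v \<Rightarrow> real) \<Rightarrow> ('v \<Rightarrow> 'v \<Rightarrow> real) \<Rightarrow> ('v \<Rightarrow> real)
     \<Rightarrow> 'v fn set \<Rightarrow> ('v fn \<Rightarrow> 'v fn) \<Rightarrow> bool" where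
  "restriction_of_Ltilde m b c D A \<longleftrightarrow> D \<subseteq> Ftilde b \<and> (\<forall>u\<in>D. A u = Ltilde m b c u)"

end

theory Submission
  imports Defs
begin

(* Proof idea.  Let S = L^(1/2), so that L = S o S and Q(u,v) = <S u, S v> on D(Q) = D(S).

   (ii) => (i): Ltilde is formally symmetric (Green's formula <Ltilde u, v> = <u, Ltilde v> for
   u in Ftilde and v in C_c(V)).  So if L restricts Ltilde, every v in C_c(V) lies in the domain
   of L^* = L with L v = Ltilde v (this uses (FC)); hence C_c(V) is contained in D(L), which lies
   in D(Q), and Q(u,v) = <u, S (S v)> = <u, Ltilde v>.  Q is non-negative, and it is closed because
   S is selfadjoint, hence has closed graph, and l^2(V,m) is complete.

   (i) => (ii): test (C2) against the point masses 1_x.  For u in D(L) the sum in (C2) is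
   (deg x + c x) u(x) - sum_y b(x,y) u(y); its absolute convergence gives u in Ftilde, and its
   value Q(u,1_x) = <L u, 1_x> = L u(x) m(x) shows L u(x) = Ltilde u(x). *)

lemma infsum_of_real_eq:
  fixes f :: "'a \<Rightarrow> real"
  assumes "f summable_on A"
  shows "infsum (\<lambda>x. complex_of_real (f x)) A = complex_of_real (infsum f A)"
  using assms by (intro infsumI) (simp add: has_sum_of_real_iff)

lemma infsum_diff:
  fixes f g :: "'a \<Rightarrow> 'b::{topological_ab_group_add, t2_space}"
  assumes "f summable_on A" "g summable_on A"
  shows "infsum (\<lambda>x. f x - g x) A = infsum f A - infsum g A"
proof -
  have "infsum (\<lambda>x. f x + - g x) A = infsum f A + infsum (\<lambda>x. - g x) A"
    using assms by (intro infsum_add) (auto simp: summable_on_uminus)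
  then show ?thesis by (simp add: infsum_uminus)
qed

lemma infsum_finite_support:
  fixes f :: "'a \<Rightarrow> 'b::{comm_monoid_add, t2_space}"
  assumes "finite F" "\<And>x. x \<notin> F \<Longrightarrow> f x = 0"
  shows "infsum f UNIV = sum f F"
proof -
  have "infsum f UNIV = infsum f F" by (rule infsum_cong_neutral) (use assms in auto)
  then show ?thesis using assms by simp
qed

lemma has_sum_finite_sum:
  fixes f :: "'i \<Rightarrow> 'a \<Rightarrow> 'b::topological_comm_monoid_add"
  assumes "finite F" "\<And>z. z \<in> F \<Longrightarrow> (f z has_sum s z) A"
  shows "((\<lambda>y. \<Sum>z\<in>F. f z y) has_sum (\<Sum>z\<in>F. s z)) A"
  using assms by (induction F rule: finite_induct) (auto intro: has_sum_add)

section \<open>The Hilbert space \<open>\<ell>\<^sup>2(V,m)\<close>\<close>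

text \<open>The squared norm, kept separately from \<open>l2norm\<close> because it is a plain series.\<close>
definition sqnorm :: "('v \<Rightarrow> real) \<Rightarrow> 'v fn \<Rightarrow> real" where
  "sqnorm m u = (\<Sum>\<^sub>\<infinity>x. (cmod (u x))^2 * m x)"

lemma l2norm_sqnorm: "l2norm m u = sqrt (sqnorm m u)"
  by (simp add: l2norm_def sqnorm_def)

lemma sqnorm_nonneg: "\<forall>x. m x > 0 \<Longrightarrow> sqnorm m u \<ge> 0"
  unfolding sqnorm_def by (rule infsum_nonneg) (simp add: less_imp_le)

lemma sqnorm_finite_le:
  assumes mp: "\<forall>x. m x > 0" and h: "h \<in> l2 m" and F: "finite F"
  shows "(\<Sum>x\<in>F. (cmod (h x))^2 * m x) \<le> sqnorm m h"
  unfolding sqnorm_def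
  using h mp F unfolding l2_def by (intro finite_sum_le_infsum) (auto simp: less_imp_le)

lemma l2_of_bounded_finite_sums:
  assumes mp: "\<forall>x. m x > 0" and bnd: "\<And>F. finite F \<Longrightarrow> (\<Sum>x\<in>F. (cmod (h x))^2 * m x) \<le> e"
  shows "h \<in> l2 m" and "sqnorm m h \<le> e"
proof -
  have s: "(\<lambda>x. (cmod (h x))^2 * m x) summable_on UNIV"
  proof (rule nonneg_bdd_above_summable_on)
    show "\<And>x. x \<in> UNIV \<Longrightarrow> 0 \<le> (cmod (h x))^2 * m x" using mp by (simp add: less_imp_le)
    show "bdd_above (sum (\<lambda>x. (cmod (h x))^2 * m x) ` {F. F \<subseteq> UNIV \<and> finite F})"
      using bnd by (intro bdd_aboveI2[where M=e]) auto
  qed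
  then show "h \<in> l2 m" unfolding l2_def by simp
  show "sqnorm m h \<le> e" unfolding sqnorm_def using bnd by (intro infsum_le_finite_sums s) auto
qed

lemma sqnorm_zero:
  assumes mp: "\<forall>x. m x > 0" and u: "u \<in> l2 m" and z: "sqnorm m u \<le> 0"
  shows "u = 0"
proof
  fix x
  have "(cmod (u x))^2 * m x = 0"
    using z u mp unfolding sqnorm_def l2_def
    by (intro nonneg_infsum_le_0D[where A=UNIV]) (auto simp: less_imp_le)
  then show "u x = 0 x" using mp[rule_format, of x] by auto
qed

lemma l2_add:
  assumes mp: "\<forall>x. m x > 0" and u: "u \<in> l2 m" and v: "v \<in> l2 m"
  shows "u + v \<in> l2 m"
proof -
  have s: "(\<lambda>x. 2 * ((cmod (u x))^2 * m x) + 2 * ((cmod (v x))^2 * m x)) summable_on UNIV"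
    using u v unfolding l2_def by (intro summable_on_add summable_on_cmult_right) auto
  have le: "(cmod (u x + v x))^2 * m x \<le> 2 * ((cmod (u x))^2 * m x) + 2 * ((cmod (v x))^2 * m x)"
    for x
  proof -
    have "(cmod (u x + v x))^2 \<le> (cmod (u x) + cmod (v x))^2"
      by (intro power_mono norm_triangle_ineq) auto
    also have "\<dots> \<le> 2 * (cmod (u x))^2 + 2 * (cmod (v x))^2"
      using zero_le_power2[of "cmod (u x) - cmod (v x)"] unfolding power2_sum power2_diff by linarith
    finally have "(cmod (u x + v x))^2 * m x \<le> (2 * (cmod (u x))^2 + 2 * (cmod (v x))^2) * m x"
      using mp[rule_format, of x] by (intro mult_right_mono) auto
    then show ?thesis by (simp add: algebra_simps)
  qed
  have "(\<lambda>x. (cmod ((u + v) x))^2 * m x) summable_on UNIV"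
    by (rule summable_on_comparison_test[OF s]) (use le mp in \<open>auto simp: less_imp_le\<close>)
  then show ?thesis unfolding l2_def by simp
qed

lemma l2_scale:
  assumes u: "u \<in> l2 m"
  shows "(\<lambda>x. a * u x) \<in> l2 m"
proof -
  have "(\<lambda>x. (cmod a)^2 * ((cmod (u x))^2 * m x)) summable_on UNIV"
    using u unfolding l2_def by (intro summable_on_cmult_right) auto
  then show ?thesis unfolding l2_def by (simp add: norm_mult power_mult_distrib mult.assoc)
qed

lemma l2_diff:
  assumes mp: "\<forall>x. m x > 0" and u: "u \<in> l2 m" and v: "v \<in> l2 m"
  shows "u - v \<in> l2 m"
proof -
  have "u - v = u + (\<lambda>x. (-1) * v x)" by (auto simp: fun_eq_iff)
  show ?thesis by (subst \<open>u - v = _\<close>) (rule l2_add[OF mp u l2_scale[OF v]])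
qed

lemma weighted_am_gm:
  fixes a b m s :: real
  assumes "a \<ge> 0" "b \<ge> 0" "m \<ge> 0" "s > 0"
  shows "a * b * m \<le> (s * (a^2 * m) + (b^2 * m) / s) / 2"
proof -
  have "0 \<le> (s * a - b)^2 * m / (2 * s)" using assms by simp
  also have "(s * a - b)^2 * m / (2 * s) = (s * (a^2 * m) + (b^2 * m) / s) / 2 - a * b * m"
    using assms by (simp add: field_simps power2_eq_square)
  finally show ?thesis by simp
qed

lemma ip_abs_summable:
  assumes mp: "\<forall>x. m x > 0" and u: "u \<in> l2 m" and v: "v \<in> l2 m"
  shows "(\<lambda>x. norm (u x * cnj (v x) * complex_of_real (m x))) summable_on UNIV"
proof -
  have s: "(\<lambda>x. (1/2) * ((cmod (u x))^2 * m x + (cmod (v x))^2 * m x)) summable_on UNIV"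
    using u v unfolding l2_def by (intro summable_on_cmult_right summable_on_add) auto
  have "norm (u x * cnj (v x) * complex_of_real (m x))
      \<le> (1/2) * ((cmod (u x))^2 * m x + (cmod (v x))^2 * m x)" for x
    using weighted_am_gm[of "cmod (u x)" "cmod (v x)" "m x" 1] mp[rule_format, of x]
    by (simp add: norm_mult abs_of_pos)
  then show ?thesis by (intro summable_on_comparison_test[OF s]) auto
qed

lemma ip_summable:
  assumes mp: "\<forall>x. m x > 0" and u: "u \<in> l2 m" and v: "v \<in> l2 m"
  shows "(\<lambda>x. u x * cnj (v x) * complex_of_real (m x)) summable_on UNIV"
  by (rule abs_summable_summable) (rule ip_abs_summable[OF assms])

lemma ip_self:
  assumes "u \<in> l2 m"
  shows "ip m u u = complex_of_real (sqnorm m u)"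
proof -
  have "ip m u u = (\<Sum>\<^sub>\<infinity>x. complex_of_real ((cmod (u x))^2 * m x))"
    unfolding ip_def by (intro infsum_cong) (simp only: of_real_mult complex_norm_square)
  also have "\<dots> = complex_of_real (sqnorm m u)" unfolding sqnorm_def
    using assms unfolding l2_def by (intro infsum_of_real_eq) auto
  finally show ?thesis .
qed

lemma ip_diff_left:
  assumes mp: "\<forall>x. m x > 0" and u: "u \<in> l2 m" and v: "v \<in> l2 m" and w: "w \<in> l2 m"
  shows "ip m (u - v) w = ip m u w - ip m v w"
proof -
  have "ip m (u - v) w = (\<Sum>\<^sub>\<infinity>x. u x * cnj (w x) * complex_of_real (m x)
                                   - v x * cnj (w x) * complex_of_real (m x))"
    unfolding ip_def by (intro infsum_cong) (simp add: algebra_simps)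
  also have "\<dots> = ip m u w - ip m v w" unfolding ip_def
    by (intro infsum_diff ip_summable mp u v w)
  finally show ?thesis .
qed

lemma ip_diff_right:
  assumes mp: "\<forall>x. m x > 0" and u: "u \<in> l2 m" and v: "v \<in> l2 m" and w: "w \<in> l2 m"
  shows "ip m w (u - v) = ip m w u - ip m w v"
proof -
  have "ip m w (u - v) = (\<Sum>\<^sub>\<infinity>x. w x * cnj (u x) * complex_of_real (m x)
                                   - w x * cnj (v x) * complex_of_real (m x))"
    unfolding ip_def by (intro infsum_cong) (simp add: algebra_simps)
  also have "\<dots> = ip m w u - ip m w v" unfolding ip_def
    by (intro infsum_diff ip_summable mp u v w)
  finally show ?thesis .
qed

text \<open>A real number bounded by all weighted AM-GM means of \<open>A\<close> and \<open>B\<close> is bounded by their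
  geometric mean; optimising over the weight \<open>s\<close> turns AM-GM into Cauchy-Schwarz.\<close>
lemma le_geometric_mean:
  fixes A B P :: real
  assumes A: "A \<ge> 0" and B: "B \<ge> 0" and h: "\<And>s. s > 0 \<Longrightarrow> P \<le> (s * A + B / s) / 2"
  shows "P \<le> sqrt A * sqrt B"
proof (cases "A > 0 \<and> B > 0")
  case True
  define s where "s = sqrt B / sqrt A"
  have "s > 0" using True by (simp add: s_def)
  moreover have "s * A = sqrt A * sqrt B" "B / s = sqrt A * sqrt B"
    using True by (simp_all add: s_def real_div_sqrt field_simps)
  ultimately show ?thesis using h by fastforce
next
  case False
  have "P \<le> 0 + e" if e: "e > 0" for e
  proof (cases "A = 0")
    case True
    have "P \<le> (B / ((B + 1) / e)) / 2" using h[of "(B + 1) / e"] e B True by simp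
    also have "\<dots> \<le> e" using e B by (simp add: field_simps)
    finally show ?thesis by simp
  next
    case False
    then have "B = 0" using \<open>\<not> (A > 0 \<and> B > 0)\<close> A B by auto
    have "P \<le> (e / (A + 1) * A) / 2" using h[of "e / (A + 1)"] e A \<open>B = 0\<close> by simp
    also have "\<dots> \<le> e" using e A by (simp add: field_simps)
    finally show ?thesis by simp
  qed
  then have "P \<le> 0" by (rule field_le_epsilon)
  then show ?thesis using False A B by auto
qed

lemma infsum_weighted_mean:
  fixes A B :: "'a \<Rightarrow> real"
  assumes su: "A summable_on UNIV" and sv: "B summable_on UNIV"
  shows "(\<lambda>x. (s * A x + B x / s) / 2) summable_on UNIV"
    and "(\<Sum>\<^sub>\<infinity>x. (s * A x + B x / s) / 2) = (s * infsum A UNIV + infsum B UNIV / s) / 2"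
proof -
  have eq: "(\<lambda>x. (s * A x + B x / s) / 2) = (\<lambda>x. (1/2) * (s * A x + inverse s * B x))"
    by (simp add: field_simps)
  have s2: "(\<lambda>x. s * A x + inverse s * B x) summable_on UNIV"
    using su sv by (intro summable_on_add summable_on_cmult_right)
  then show "(\<lambda>x. (s * A x + B x / s) / 2) summable_on UNIV"
    unfolding eq by (intro summable_on_cmult_right)
  have "(\<Sum>\<^sub>\<infinity>x. s * A x + inverse s * B x) = (\<Sum>\<^sub>\<infinity>x. s * A x) + (\<Sum>\<^sub>\<infinity>x. inverse s * B x)"
    using su sv by (intro infsum_add summable_on_cmult_right)
  also have "\<dots> = s * infsum A UNIV + inverse s * infsum B UNIV"
    by (simp only: infsum_cmult_right')
  finally have "(\<Sum>\<^sub>\<infinity>x. (1/2) * (s * A x + inverse s * B x))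
      = (1/2) * (s * infsum A UNIV + inverse s * infsum B UNIV)"
    by (simp only: infsum_cmult_right')
  then show "(\<Sum>\<^sub>\<infinity>x. (s * A x + B x / s) / 2) = (s * infsum A UNIV + infsum B UNIV / s) / 2"
    unfolding eq by (simp add: field_simps)
qed

lemma cauchy_schwarz:
  assumes mp: "\<forall>x. m x > 0" and u: "u \<in> l2 m" and v: "v \<in> l2 m"
  shows "cmod (ip m u v) \<le> l2norm m u * l2norm m v"
proof -
  let ?P = "\<Sum>\<^sub>\<infinity>x. norm (u x * cnj (v x) * complex_of_real (m x))"
  have su: "(\<lambda>x. (cmod (u x))^2 * m x) summable_on UNIV"
    and sv: "(\<lambda>x. (cmod (v x))^2 * m x) summable_on UNIV"
    using u v unfolding l2_def by auto
  have "cmod (ip m u v) \<le> ?P" unfolding ip_def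
    by (rule norm_infsum_bound) (rule ip_abs_summable[OF mp u v])
  also have "?P \<le> sqrt (sqnorm m u) * sqrt (sqnorm m v)"
  proof (rule le_geometric_mean)
    show "sqnorm m u \<ge> 0" "sqnorm m v \<ge> 0" using sqnorm_nonneg[OF mp] by auto
    fix s :: real assume s: "s > 0"
    have "norm (u x * cnj (v x) * complex_of_real (m x))
        \<le> (s * ((cmod (u x))^2 * m x) + (cmod (v x))^2 * m x / s) / 2" for x
      using weighted_am_gm[of "cmod (u x)" "cmod (v x)" "m x" s] s mp[rule_format, of x]
      by (simp add: norm_mult abs_of_pos)
    then have "?P \<le> (\<Sum>\<^sub>\<infinity>x. (s * ((cmod (u x))^2 * m x) + (cmod (v x))^2 * m x / s) / 2)"
      by (intro infsum_mono ip_abs_summable mp u v infsum_weighted_mean(1)[OF su sv])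
    also have "\<dots> = (s * sqnorm m u + sqnorm m v / s) / 2"
      unfolding sqnorm_def by (rule infsum_weighted_mean(2)[OF su sv])
    finally show "?P \<le> (s * sqnorm m u + sqnorm m v / s) / 2" .
  qed
  finally show ?thesis by (simp add: l2norm_sqnorm)
qed

lemma cauchy_pointwise:
  assumes mp: "\<forall>x. m x > 0" and g: "\<And>n. g n \<in> l2 m"
    and cau: "\<And>e. e > 0 \<Longrightarrow> \<exists>N. \<forall>n\<ge>N. \<forall>k\<ge>N. sqnorm m (g n - g k) < e"
  shows "Cauchy (\<lambda>n. g n x)"
proof (rule CauchyI)
  fix e :: real assume e: "e > 0"
  have mx: "m x > 0" using mp by auto
  obtain N where N: "\<forall>n\<ge>N. \<forall>k\<ge>N. sqnorm m (g n - g k) < e^2 * m x"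
    using cau[of "e^2 * m x"] e mx by auto
  show "\<exists>M. \<forall>n\<ge>M. \<forall>k\<ge>M. norm (g n x - g k x) < e"
  proof (intro exI allI impI)
    fix n k assume "N \<le> n" "N \<le> k"
    then have "(cmod (g n x - g k x))^2 * m x < e^2 * m x"
      using sqnorm_finite_le[OF mp l2_diff[OF mp g g], of "{x}" n k] N by force
    then have "(cmod (g n x - g k x))^2 < e^2" using mx by simp
    then show "norm (g n x - g k x) < e" using e by (simp add: power_less_imp_less_base)
  qed
qed

text \<open>Completeness of \<open>\<ell>\<^sup>2(V,m)\<close>: the pointwise limit of a Cauchy sequence is its
  limit in norm.\<close>
lemma l2_complete:
  assumes mp: "\<forall>x. m x > 0" and g: "\<And>n. g n \<in> l2 m"
    and cau: "\<And>e. e > 0 \<Longrightarrow> \<exists>N. \<forall>n\<ge>N. \<forall>k\<ge>N. sqnorm m (g n - g k) < e"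
  shows "\<exists>w\<in>l2 m. (\<lambda>n. sqnorm m (g n - w)) \<longlonglongrightarrow> 0"
proof -
  define w where "w x = lim (\<lambda>n. g n x)" for x
  have conv: "(\<lambda>n. g n x) \<longlonglongrightarrow> w x" for x
    unfolding w_def using cauchy_pointwise[OF mp g cau, of x]
    by (simp add: Cauchy_convergent_iff convergent_LIMSEQ_iff)
  have tail: "\<exists>N. \<forall>n\<ge>N. g n - w \<in> l2 m \<and> sqnorm m (g n - w) \<le> e" if e: "e > 0" for e
  proof -
    obtain N where N: "\<forall>n\<ge>N. \<forall>k\<ge>N. sqnorm m (g n - g k) < e" using cau[OF e] by auto
    have "(\<Sum>x\<in>F. (cmod (g n x - w x))^2 * m x) \<le> e" if n: "n \<ge> N" and F: "finite F" for n F
    proof (rule LIMSEQ_le_const2)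
      show "(\<lambda>k. \<Sum>x\<in>F. (cmod (g n x - g k x))^2 * m x) \<longlonglongrightarrow> (\<Sum>x\<in>F. (cmod (g n x - w x))^2 * m x)"
        by (intro tendsto_intros conv)
      show "\<exists>N'. \<forall>k\<ge>N'. (\<Sum>x\<in>F. (cmod (g n x - g k x))^2 * m x) \<le> e"
      proof (intro exI allI impI)
        fix k assume k: "N \<le> k"
        have "(\<Sum>x\<in>F. (cmod (g n x - g k x))^2 * m x) \<le> sqnorm m (g n - g k)"
          using sqnorm_finite_le[OF mp l2_diff[OF mp g g] F, of n k] by simp
        also have "\<dots> < e" using N n k by auto
        finally show "(\<Sum>x\<in>F. (cmod (g n x - g k x))^2 * m x) \<le> e" by simp
      qed
    qed
    then have "g n - w \<in> l2 m \<and> sqnorm m (g n - w) \<le> e" if "n \<ge> N" for n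
      using l2_of_bounded_finite_sums[OF mp, of "g n - w" e] that by simp
    then show ?thesis by blast
  qed
  obtain N1 where N1: "g N1 - w \<in> l2 m" using tail[of 1] by auto
  have "w = g N1 - (g N1 - w)" by simp
  also have "\<dots> \<in> l2 m" by (rule l2_diff[OF mp g N1])
  finally have wl2: "w \<in> l2 m" .
  have "(\<lambda>n. sqnorm m (g n - w)) \<longlonglongrightarrow> 0"
  proof (rule LIMSEQ_I)
    fix r :: real assume r: "r > 0"
    obtain N where N: "\<forall>n\<ge>N. sqnorm m (g n - w) \<le> r / 2" using tail[of "r / 2"] r by auto
    have "norm (sqnorm m (g n - w) - 0) < r" if "n \<ge> N" for n
      using N that r sqnorm_nonneg[OF mp, of "g n - w"] by auto
    then show "\<exists>N. \<forall>n\<ge>N. norm (sqnorm m (g n - w) - 0) < r" by blast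
  qed
  then show ?thesis using wl2 by blast
qed

section \<open>Selfadjoint operators and their forms\<close>

lemma linear_op_diff:
  assumes lin: "linear_op m D A" and u: "u \<in> D" and v: "v \<in> D"
  shows "u - v \<in> D" and "A (u - v) = A u - A v"
proof -
  have eq: "u - v = u + (\<lambda>x. (-1) * v x)" by (auto simp: fun_eq_iff)
  have sv: "(\<lambda>x. (-1) * v x) \<in> D" "A (\<lambda>x. (-1) * v x) = (\<lambda>x. (-1) * A v x)"
    using lin v unfolding linear_op_def by blast+
  have "u + (\<lambda>x. (-1) * v x) \<in> D" "A (u + (\<lambda>x. (-1) * v x)) = A u + A (\<lambda>x. (-1) * v x)"
    using lin u sv(1) unfolding linear_op_def by blast+
  then show "u - v \<in> D" "A (u - v) = A u - A v" using sv(2) by (simp_all add: eq fun_eq_iff)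
qed

lemma ip_tendsto_right:
  assumes mp: "\<forall>x. m x > 0" and x: "x \<in> l2 m" and a: "\<And>n. a n \<in> l2 m" and a0: "a0 \<in> l2 m"
    and lim: "(\<lambda>n. l2norm m (a n - a0)) \<longlonglongrightarrow> 0"
  shows "(\<lambda>n. ip m x (a n)) \<longlonglongrightarrow> ip m x a0"
proof (rule LIM_zero_cancel, rule Lim_null_comparison)
  show "\<forall>\<^sub>F n in sequentially. norm (ip m x (a n) - ip m x a0) \<le> l2norm m x * l2norm m (a n - a0)"
    using cauchy_schwarz[OF mp x l2_diff[OF mp a a0]] ip_diff_right[OF mp a a0 x] by simp
  show "(\<lambda>n. l2norm m x * l2norm m (a n - a0)) \<longlonglongrightarrow> 0"
    using tendsto_mult_right_zero[OF lim] by simp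
qed

lemma orthogonal_dense_zero:
  assumes mp: "\<forall>x. m x > 0" and dense: "densely_defined m D" and D: "D \<subseteq> l2 m"
    and z: "z \<in> l2 m" and orth: "\<And>h. h \<in> D \<Longrightarrow> ip m h z = 0"
  shows "z = 0"
proof (rule sqnorm_zero[OF mp z], rule ccontr)
  assume "\<not> sqnorm m z \<le> 0"
  define r where "r = l2norm m z"
  have r: "r > 0" "r * r = sqnorm m z" using \<open>\<not> sqnorm m z \<le> 0\<close> by (auto simp: r_def l2norm_sqnorm)
  obtain h where h: "h \<in> D" "l2norm m (z - h) < r / 2"
    using dense z r(1) unfolding densely_defined_def by (meson half_gt_zero)
  have hl2: "h \<in> l2 m" using D h(1) by auto
  have "ip m (z - h) z = ip m z z" using ip_diff_left[OF mp z hl2 z] orth[OF h(1)] by simp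
  then have "sqnorm m z = cmod (ip m (z - h) z)" using ip_self[OF z] sqnorm_nonneg[OF mp, of z] by simp
  also have "\<dots> \<le> l2norm m (z - h) * r" unfolding r_def
    by (intro cauchy_schwarz mp l2_diff z hl2)
  also have "\<dots> \<le> r / 2 * r" using h(2) r(1) by (intro mult_right_mono) auto
  finally have "r * r \<le> r / 2 * r" using r(2) by simp
  then show False using r(1) by (simp add: mult_le_cancel_right)
qed

text \<open>Symmetry gives \<open>\<langle>S h, u\<rangle> = \<langle>h, w\<rangle>\<close> in the limit, so \<open>u\<close> lies in the adjoint's domain, which
  is the domain of \<open>S\<close>; then \<open>w - S u\<close> is orthogonal to the dense domain.\<close>
lemma selfadjoint_closed_graph:
  assumes mp: "\<forall>x. m x > 0" and sa: "selfadjoint m DS S"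
    and f: "\<And>n. f n \<in> DS" and u: "u \<in> l2 m" and w: "w \<in> l2 m"
    and fu: "(\<lambda>n. l2norm m (f n - u)) \<longlonglongrightarrow> 0" and Sfw: "(\<lambda>n. l2norm m (S (f n) - w)) \<longlonglongrightarrow> 0"
  shows "u \<in> DS" and "S u = w"
proof -
  have lin: "linear_op m DS S" and dense: "densely_defined m DS"
    and sym: "\<And>a b. a \<in> DS \<Longrightarrow> b \<in> DS \<Longrightarrow> ip m (S a) b = ip m a (S b)"
    and adj: "\<And>v. v \<in> l2 m \<Longrightarrow> (\<exists>w\<in>l2 m. \<forall>a\<in>DS. ip m (S a) v = ip m a w) \<Longrightarrow> v \<in> DS"
    using sa unfolding selfadjoint_def by blast+
  have DSl2: "DS \<subseteq> l2 m" and Sl2: "\<And>a. a \<in> DS \<Longrightarrow> S a \<in> l2 m"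
    using lin unfolding linear_op_def by blast+
  have weak: "ip m (S h) u = ip m h w" if h: "h \<in> DS" for h
  proof (rule LIMSEQ_unique)
    show "(\<lambda>n. ip m (S h) (f n)) \<longlonglongrightarrow> ip m (S h) u"
      using f DSl2 by (intro ip_tendsto_right mp Sl2 h u fu) auto
    have "(\<lambda>n. ip m h (S (f n))) \<longlonglongrightarrow> ip m h w"
      using h DSl2 by (intro ip_tendsto_right mp w Sfw Sl2 f) auto
    then show "(\<lambda>n. ip m (S h) (f n)) \<longlonglongrightarrow> ip m h w"
      using sym[OF h f] by simp
  qed
  then show uDS: "u \<in> DS" using adj[OF u] w by blast
  have "w - S u = 0"
  proof (rule orthogonal_dense_zero[OF mp dense DSl2])
    show "w - S u \<in> l2 m" by (intro l2_diff mp w Sl2 uDS)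
    fix h assume h: "h \<in> DS"
    show "ip m h (w - S u) = 0"
      using ip_diff_right[OF mp w Sl2[OF uDS]] DSl2 h weak[OF h] sym[OF h uDS] by auto
  qed
  then show "S u = w" by simp
qed

lemma assoc_form_diff:
  assumes mp: "\<forall>x. m x > 0" and lin: "linear_op m DS S" and a: "a \<in> DS" and b: "b \<in> DS"
  shows "Re (assoc_form m S (a - b) (a - b)) = sqnorm m (S a - S b)"
proof -
  have Sa: "S a \<in> l2 m" and Sb: "S b \<in> l2 m" using lin a b unfolding linear_op_def by blast+
  have "assoc_form m S (a - b) (a - b) = ip m (S a - S b) (S a - S b)"
    unfolding assoc_form_def linear_op_diff(2)[OF lin a b] ..
  also have "\<dots> = complex_of_real (sqnorm m (S a - S b))" by (rule ip_self[OF l2_diff[OF mp Sa Sb]])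
  finally show ?thesis by simp
qed

text \<open>A form
  Cauchy sequence \<open>f\<^sub>n\<close> has \<open>S f\<^sub>n\<close> Cauchy in \<open>\<ell>\<^sup>2\<close>; its limit \<open>w\<close> equals \<open>S u\<close> by closedness
  of the graph of \<open>S\<close>.\<close>
lemma selfadjoint_form_closed:
  assumes mp: "\<forall>x. m x > 0" and sa: "selfadjoint m DS S"
  shows "closed_form m DS (assoc_form m S)"
  unfolding closed_form_def
proof (intro allI impI)
  fix f u
  assume f: "\<forall>n. f n \<in> DS" and u: "u \<in> l2 m" and fu: "(\<lambda>n. l2norm m (f n - u)) \<longlonglongrightarrow> 0"
    and cau: "\<forall>e>0. \<exists>N. \<forall>n\<ge>N. \<forall>k\<ge>N. Re (assoc_form m S (f n - f k) (f n - f k)) < e"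
  have fD: "\<And>n. f n \<in> DS" using f by blast
  have lin: "linear_op m DS S" using sa unfolding selfadjoint_def by blast
  have Sfl2: "\<And>n. S (f n) \<in> l2 m" using lin fD unfolding linear_op_def by blast
  have dist: "\<And>n k. Re (assoc_form m S (f n - f k) (f n - f k)) = sqnorm m (S (f n) - S (f k))"
    by (rule assoc_form_diff[OF mp lin fD fD])
  have cauS: "\<exists>N. \<forall>n\<ge>N. \<forall>k\<ge>N. sqnorm m (S (f n) - S (f k)) < e" if e: "e > 0" for e
  proof -
    obtain N where "\<forall>n\<ge>N. \<forall>k\<ge>N. Re (assoc_form m S (f n - f k) (f n - f k)) < e"
      using cau e by blast
    then show ?thesis unfolding dist by blast
  qed
  obtain w where w: "w \<in> l2 m" and Sfw: "(\<lambda>n. sqnorm m (S (f n) - w)) \<longlonglongrightarrow> 0"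
    using l2_complete[OF mp Sfl2 cauS] by blast
  have "(\<lambda>n. l2norm m (S (f n) - w)) \<longlonglongrightarrow> 0"
    unfolding l2norm_sqnorm using tendsto_real_sqrt[OF Sfw] by simp
  then have uDS: "u \<in> DS" and Su: "S u = w"
    using selfadjoint_closed_graph[OF mp sa fD u w fu] by blast+
  have "Re (assoc_form m S (f n - u) (f n - u)) = sqnorm m (S (f n) - w)" for n
    using assoc_form_diff[OF mp lin fD uDS] Su by simp
  then show "u \<in> DS \<and> (\<lambda>n. Re (assoc_form m S (f n - u) (f n - u))) \<longlonglongrightarrow> 0"
    using uDS Sfw by simp
qed

section \<open>The formal graph Laplacian \<open>Ltilde\<close>\<close>

text \<open>The weighted degree \<open>deg(x) = \<Sum>\<^sub>y b(x,y)\<close> and the neighbour sum \<open>\<Sum>\<^sub>y b(x,y) u(y)\<close>;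
  on \<open>Ftilde\<close> the Laplacian is \<open>Ltilde u (x) = ((deg(x) + c(x)) u(x) - \<Sum>\<^sub>y b(x,y) u(y)) / m(x)\<close>.\<close>
definition deg :: "('v \<Rightarrow> 'v \<Rightarrow> real) \<Rightarrow> 'v \<Rightarrow> real" where
  "deg b x = (\<Sum>\<^sub>\<infinity>y. b x y)"

definition nbsum :: "('v \<Rightarrow> 'v \<Rightarrow> real) \<Rightarrow> 'v fn \<Rightarrow> 'v \<Rightarrow> complex" where
  "nbsum b u x = (\<Sum>\<^sub>\<infinity>y. complex_of_real (b x y) * u y)"

lemma Ftilde_summable:
  assumes "u \<in> Ftilde b"
  shows "(\<lambda>y. complex_of_real (b x y) * u y) summable_on UNIV"
  using assms unfolding Ftilde_def by (blast intro: abs_summable_summable)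

lemma Ltilde_times_m:
  assumes mx: "m x > 0" and bs: "(\<lambda>y. b x y) summable_on UNIV"
    and row: "(\<lambda>y. complex_of_real (b x y) * u y) summable_on UNIV"
  shows "Ltilde m b c u x * complex_of_real (m x) = complex_of_real (deg b x + c x) * u x - nbsum b u x"
proof -
  have s1: "(\<lambda>y. complex_of_real (b x y) * u x) summable_on UNIV"
    by (intro summable_on_cmult_left summable_on_of_real bs)
  have "(\<Sum>\<^sub>\<infinity>y. complex_of_real (b x y) * (u x - u y))
      = (\<Sum>\<^sub>\<infinity>y. complex_of_real (b x y) * u x - complex_of_real (b x y) * u y)"
    by (simp add: algebra_simps)
  also have "\<dots> = (\<Sum>\<^sub>\<infinity>y. complex_of_real (b x y) * u x) - nbsum b u x"
    unfolding nbsum_def by (intro infsum_diff s1 row)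
  also have "(\<Sum>\<^sub>\<infinity>y. complex_of_real (b x y) * u x) = complex_of_real (deg b x) * u x"
    unfolding deg_def using bs by (simp add: infsum_cmult_left' infsum_of_real_eq)
  finally have eq: "(\<Sum>\<^sub>\<infinity>y. complex_of_real (b x y) * (u x - u y))
      = complex_of_real (deg b x) * u x - nbsum b u x" .
  show ?thesis unfolding Ltilde_def eq using mx by (simp add: field_simps)
qed

lemma Cc_Ftilde: "v \<in> Cc \<Longrightarrow> v \<in> Ftilde b"
  unfolding Cc_def Ftilde_def
  by (auto intro!: finite_nonzero_values_imp_summable_on elim!: rev_finite_subset)

lemma Cc_l2: "v \<in> Cc \<Longrightarrow> v \<in> l2 m"
  unfolding Cc_def l2_def
  by (auto intro!: finite_nonzero_values_imp_summable_on elim!: rev_finite_subset)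

text \<open>The summand of \<open>\<langle>u, Ltilde v\<rangle>\<close> for finitely supported \<open>v\<close>, written using the symmetry of
  \<open>b\<close> so that the neighbour sum runs over the support of \<open>v\<close>.\<close>
lemma pairing_Ltilde_Cc_term:
  assumes mp: "\<forall>x. m x > 0" and gr: "is_graph b c" and v: "v \<in> Cc"
  shows "u y * cnj (Ltilde m b c v y) * complex_of_real (m y)
       = u y * complex_of_real (deg b y + c y) * cnj (v y)
         - (\<Sum>z\<in>{x. v x \<noteq> 0}. cnj (v z) * (complex_of_real (b z y) * u y))"
proof -
  have bs: "(\<lambda>z. b y z) summable_on UNIV" using gr unfolding is_graph_def by blast
  have bsym: "\<And>z. b y z = b z y" using gr unfolding is_graph_def by blast
  have "Ltilde m b c v y * complex_of_real (m y) = complex_of_real (deg b y + c y) * v y - nbsum b v y"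
    using mp bs Ftilde_summable[OF Cc_Ftilde[OF v]] by (intro Ltilde_times_m) auto
  then have "cnj (Ltilde m b c v y) * complex_of_real (m y)
      = complex_of_real (deg b y + c y) * cnj (v y) - cnj (nbsum b v y)"
    by (metis complex_cnj_complex_of_real complex_cnj_diff complex_cnj_mult)
  moreover have "nbsum b v y = (\<Sum>z\<in>{x. v x \<noteq> 0}. complex_of_real (b y z) * v z)"
    unfolding nbsum_def using v unfolding Cc_def by (intro infsum_finite_support) auto
  ultimately have "cnj (Ltilde m b c v y) * complex_of_real (m y)
      = complex_of_real (deg b y + c y) * cnj (v y) - (\<Sum>z\<in>{x. v x \<noteq> 0}. complex_of_real (b z y) * cnj (v z))"
    by (simp add: bsym)
  then show ?thesis
    by (simp add: mult.assoc right_diff_distrib sum_distrib_left mult_ac)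
qed

lemma green:
  assumes mp: "\<forall>x. m x > 0" and gr: "is_graph b c" and u: "u \<in> Ftilde b" and v: "v \<in> Cc"
  shows "ip m (Ltilde m b c u) v = ip m u (Ltilde m b c v)"
proof -
  define F where "F = {x. v x \<noteq> 0}"
  have F: "finite F" using v unfolding Cc_def F_def by auto
  have bs: "\<And>x. (\<lambda>y. b x y) summable_on UNIV" using gr unfolding is_graph_def by blast
  have Lu: "Ltilde m b c u x * complex_of_real (m x) = complex_of_real (deg b x + c x) * u x - nbsum b u x"
    for x using Ltilde_times_m[where m=m and x=x and b=b and u=u and c=c, OF _ bs Ftilde_summable[OF u]] mp by blast
  have "ip m (Ltilde m b c u) v = (\<Sum>x\<in>F. Ltilde m b c u x * cnj (v x) * complex_of_real (m x))"
    unfolding ip_def by (rule infsum_finite_support[OF F]) (auto simp: F_def)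
  also have "\<dots> = (\<Sum>x\<in>F. (Ltilde m b c u x * complex_of_real (m x)) * cnj (v x))"
    by (simp add: mult_ac)
  also have "\<dots> = (\<Sum>x\<in>F. (complex_of_real (deg b x + c x) * u x - nbsum b u x) * cnj (v x))"
    by (simp only: Lu)
  also have "\<dots> = (\<Sum>x\<in>F. u x * complex_of_real (deg b x + c x) * cnj (v x))
                  - (\<Sum>z\<in>F. cnj (v z) * nbsum b u z)"
    by (simp add: sum_subtractf algebra_simps)
  also have "\<dots> = ip m u (Ltilde m b c v)"
  proof -
    have diag: "((\<lambda>y. u y * complex_of_real (deg b y + c y) * cnj (v y)) has_sum
        (\<Sum>x\<in>F. u x * complex_of_real (deg b x + c x) * cnj (v x))) UNIV"
      by (rule has_sum_finite_neutralI) (use F in \<open>auto simp: F_def\<close>)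
    have nb: "((\<lambda>y. \<Sum>z\<in>F. cnj (v z) * (complex_of_real (b z y) * u y))
        has_sum (\<Sum>z\<in>F. cnj (v z) * nbsum b u z)) UNIV"
      unfolding nbsum_def
      by (intro has_sum_finite_sum F has_sum_cmult_right) (simp add: Ftilde_summable[OF u])
    have "((\<lambda>y. u y * cnj (Ltilde m b c v y) * complex_of_real (m y)) has_sum
        ((\<Sum>x\<in>F. u x * complex_of_real (deg b x + c x) * cnj (v x))
         - (\<Sum>z\<in>F. cnj (v z) * nbsum b u z))) UNIV"
      using has_sum_add[OF diag has_sum_uminusI[OF nb]]
      by (simp add: pairing_Ltilde_Cc_term[OF mp gr v] F_def)
    then show ?thesis unfolding ip_def by (simp add: infsumI)
  qed
  finally show ?thesis .
qed

section \<open>Testing against point masses\<close>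

definition point_mass :: "'v \<Rightarrow> 'v fn" where
  "point_mass x = (\<lambda>y. if y = x then 1 else 0)"

lemma point_mass_Cc: "point_mass x \<in> Cc"
  unfolding Cc_def point_mass_def by simp

lemma ip_point_mass: "ip m w (point_mass x) = w x * complex_of_real (m x)"
proof -
  have "ip m w (point_mass x) = (\<Sum>y\<in>{x}. w y * cnj (point_mass x y) * complex_of_real (m y))"
    unfolding ip_def by (rule infsum_finite_support) (auto simp: point_mass_def)
  then show ?thesis by (simp add: point_mass_def)
qed

lemma pairing_point_mass_term:
  assumes mp: "\<forall>x. m x > 0" and gr: "is_graph b c"
  shows "u y * cnj (Ltilde m b c (point_mass x) y) * complex_of_real (m y)
       = (if y = x then u x * complex_of_real (deg b x + c x) else 0) - complex_of_real (b x y) * u y"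
proof -
  have bxx: "b x x = 0" and bsym: "b y x = b x y"
    using gr unfolding is_graph_def by blast+
  have "u y * cnj (Ltilde m b c (point_mass x) y) * complex_of_real (m y)
      = u y * complex_of_real (deg b y + c y) * cnj (point_mass x y)
        - (\<Sum>z\<in>{x}. cnj (point_mass x z) * (complex_of_real (b z y) * u y))"
    using pairing_Ltilde_Cc_term[OF mp gr point_mass_Cc] by (simp add: point_mass_def)
  then show ?thesis using bxx bsym by (auto simp: point_mass_def)
qed

lemma test_point_mass:
  assumes mp: "\<forall>x. m x > 0" and gr: "is_graph b c"
    and summ: "(\<lambda>y. norm (u y * cnj (Ltilde m b c (point_mass x) y) * complex_of_real (m y))) summable_on UNIV"
  shows "(\<lambda>y. norm (complex_of_real (b x y) * u y)) summable_on UNIV"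
    and "(\<Sum>\<^sub>\<infinity>y. u y * cnj (Ltilde m b c (point_mass x) y) * complex_of_real (m y))
         = Ltilde m b c u x * complex_of_real (m x)"
proof -
  have bs: "(\<lambda>y. b x y) summable_on UNIV" and bxx: "b x x = 0"
    using gr unfolding is_graph_def by blast+
  note summand = pairing_point_mass_term[OF mp gr, of u _ x]
  show row: "(\<lambda>y. norm (complex_of_real (b x y) * u y)) summable_on UNIV"
  proof (rule summable_on_comparison_test[OF summ])
    fix y
    show "norm (complex_of_real (b x y) * u y)
        \<le> norm (u y * cnj (Ltilde m b c (point_mass x) y) * complex_of_real (m y))"
      unfolding summand by (cases "y = x") (auto simp: bxx)
  qed simp
  have diag: "(\<lambda>y. if y = x then u x * complex_of_real (deg b x + c x) else 0) summable_on UNIV"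
    by (rule finite_nonzero_values_imp_summable_on) (auto intro: rev_finite_subset[of "{x}"])
  have "(\<Sum>\<^sub>\<infinity>y. u y * cnj (Ltilde m b c (point_mass x) y) * complex_of_real (m y))
      = (\<Sum>\<^sub>\<infinity>y. if y = x then u x * complex_of_real (deg b x + c x) else 0) - nbsum b u x"
    unfolding summand nbsum_def by (intro infsum_diff diag abs_summable_summable[OF row])
  also have "(\<Sum>\<^sub>\<infinity>y. if y = x then u x * complex_of_real (deg b x + c x) else 0)
      = u x * complex_of_real (deg b x + c x)"
    by (subst infsum_finite_support[where F="{x}"]) auto
  also have "u x * complex_of_real (deg b x + c x) - nbsum b u x = Ltilde m b c u x * complex_of_real (m x)"
    using Ltilde_times_m[where m=m and x=x and b=b and u=u and c=c, OF _ bs abs_summable_summable[OF row]] mp by (simp add: mult.commute)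
  finally show "(\<Sum>\<^sub>\<infinity>y. u y * cnj (Ltilde m b c (point_mass x) y) * complex_of_real (m y))
      = Ltilde m b c u x * complex_of_real (m x)" .
qed

text \<open>(i) \<open>\<Longrightarrow>\<close> (ii): testing (C2) with a point mass \<open>1\<^sub>x\<close> and using
  \<open>Q(u, 1\<^sub>x) = \<langle>S u, S 1\<^sub>x\<rangle> = \<langle>L u, 1\<^sub>x\<rangle> = L u(x) m(x)\<close> for \<open>u \<in> D(L)\<close>.\<close>
lemma condition_C_imp_restriction:
  assumes mp: "\<forall>x. m x > 0" and gr: "is_graph b c" and sqrt: "is_sqrt_op m D L DS S"
    and C: "condition_C m b c DS (assoc_form m S)"
  shows "restriction_of_Ltilde m b c D L"
proof -
  have saS: "selfadjoint m DS S" and Ddef: "D = {u\<in>DS. S u \<in> DS}" and LSS: "\<And>u. u \<in> D \<Longrightarrow> L u = S (S u)"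
    using sqrt unfolding is_sqrt_op_def by blast+
  have sym: "\<And>a b. a \<in> DS \<Longrightarrow> b \<in> DS \<Longrightarrow> ip m (S a) b = ip m a (S b)"
    using saS unfolding selfadjoint_def by blast
  have CcDS: "Cc \<subseteq> DS"
    and C2: "\<And>u v. u \<in> DS \<Longrightarrow> v \<in> Cc \<Longrightarrow>
        (\<lambda>x. norm (u x * cnj (Ltilde m b c v x) * complex_of_real (m x))) summable_on UNIV \<and>
        (\<Sum>\<^sub>\<infinity>x. u x * cnj (Ltilde m b c v x) * complex_of_real (m x)) = assoc_form m S u v"
    using C unfolding condition_C_def by blast+
  have "(\<lambda>y. norm (complex_of_real (b x y) * u y)) summable_on UNIV \<and> L u x = Ltilde m b c u x"
    if u: "u \<in> D" for u x
  proof -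
    have uDS: "u \<in> DS" and SuDS: "S u \<in> DS" using u unfolding Ddef by blast+
    have 1: "point_mass x \<in> DS" by (rule subsetD[OF CcDS point_mass_Cc])
    have summ: "(\<lambda>y. norm (u y * cnj (Ltilde m b c (point_mass x) y) * complex_of_real (m y))) summable_on UNIV"
      and val: "(\<Sum>\<^sub>\<infinity>y. u y * cnj (Ltilde m b c (point_mass x) y) * complex_of_real (m y))
                = assoc_form m S u (point_mass x)"
      using C2[OF uDS point_mass_Cc] by blast+
    have "L u x * complex_of_real (m x) = ip m (L u) (point_mass x)" by (rule ip_point_mass[symmetric])
    also have "\<dots> = assoc_form m S u (point_mass x)"
      unfolding assoc_form_def LSS[OF u] by (rule sym[OF SuDS 1])
    also have "\<dots> = Ltilde m b c u x * complex_of_real (m x)"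
      unfolding val[symmetric] by (rule test_point_mass(2)[OF mp gr summ])
    finally have "L u x = Ltilde m b c u x" using mp[rule_format, of x] by simp
    then show ?thesis using test_point_mass(1)[OF mp gr summ] by blast
  qed
  then show ?thesis unfolding restriction_of_Ltilde_def Ftilde_def by blast
qed

text \<open>If \<open>L\<close> restricts \<open>Ltilde\<close>, then by Green's formula and (FC) every finitely supported \<open>v\<close>
  lies in the domain of \<open>L\<^sup>* = L\<close>.\<close>
lemma Cc_subset_domain:
  fixes m :: "'v \<Rightarrow> real"
  assumes mp: "\<forall>x. m x > 0" and gr: "is_graph b c" and fc: "FC m b c"
    and sa: "selfadjoint m D L" and R: "restriction_of_Ltilde m b c D L"
  shows "Cc \<subseteq> D"
proof
  fix v :: "'v fn" assume v: "v \<in> Cc"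
  have adj: "\<And>v. v \<in> l2 m \<Longrightarrow> (\<exists>w\<in>l2 m. \<forall>a\<in>D. ip m (L a) v = ip m a w) \<Longrightarrow> v \<in> D"
    using sa unfolding selfadjoint_def by blast
  have "ip m (L a) v = ip m a (Ltilde m b c v)" if a: "a \<in> D" for a
    using R a green[OF mp gr _ v] unfolding restriction_of_Ltilde_def by auto
  moreover have "Ltilde m b c v \<in> l2 m" using fc v unfolding FC_def by blast
  ultimately show "v \<in> D" using adj[OF Cc_l2[OF v]] by blast
qed

text \<open>(ii) \<open>\<Longrightarrow>\<close> (i): (C0) holds for every form of a selfadjoint operator, (C1) follows from
  \<open>C\<^sub>c(V) \<subseteq> D(L) \<subseteq> D(S)\<close>, and (C2) from \<open>Q(u,v) = \<langle>u, S (S v)\<rangle> = \<langle>u, Ltilde v\<rangle>\<close>.\<close>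
lemma restriction_imp_condition_C:
  fixes m :: "'v \<Rightarrow> real"
  assumes mp: "\<forall>x. m x > 0" and gr: "is_graph b c" and fc: "FC m b c"
    and sa: "selfadjoint m D L" and sqrt: "is_sqrt_op m D L DS S"
    and R: "restriction_of_Ltilde m b c D L"
  shows "condition_C m b c DS (assoc_form m S)"
proof -
  have saS: "selfadjoint m DS S" and Ddef: "D = {u\<in>DS. S u \<in> DS}" and LSS: "\<And>u. u \<in> D \<Longrightarrow> L u = S (S u)"
    using sqrt unfolding is_sqrt_op_def by blast+
  have sym: "\<And>a b. a \<in> DS \<Longrightarrow> b \<in> DS \<Longrightarrow> ip m (S a) b = ip m a (S b)"
    and DSl2: "\<And>a. a \<in> DS \<Longrightarrow> a \<in> l2 m" and Sl2: "\<And>a. a \<in> DS \<Longrightarrow> S a \<in> l2 m"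
    using saS unfolding selfadjoint_def linear_op_def by blast+
  have LLt: "\<And>u. u \<in> D \<Longrightarrow> L u = Ltilde m b c u" using R unfolding restriction_of_Ltilde_def by blast
  have CcD: "Cc \<subseteq> D" by (rule Cc_subset_domain[OF mp gr fc sa R])
  show ?thesis unfolding condition_C_def
  proof (intro conjI ballI)
    fix u assume u: "u \<in> DS"
    have "assoc_form m S u u = complex_of_real (sqnorm m (S u))"
      unfolding assoc_form_def by (rule ip_self[OF Sl2[OF u]])
    then show "Im (assoc_form m S u u) = 0" "0 \<le> Re (assoc_form m S u u)"
      using sqnorm_nonneg[OF mp] by auto
  next
    show "closed_form m DS (assoc_form m S)" by (rule selfadjoint_form_closed[OF mp saS])
  next
    show "Cc \<subseteq> DS" using CcD Ddef by blast
  next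
    fix u and v :: "'v fn" assume u: "u \<in> DS" and v: "v \<in> Cc"
    show "(\<lambda>x. norm (u x * cnj (Ltilde m b c v x) * complex_of_real (m x))) summable_on UNIV"
      using fc v unfolding FC_def by (blast intro: ip_abs_summable[OF mp DSl2[OF u]])
    have vD: "v \<in> D" using CcD v by blast
    have "(\<Sum>\<^sub>\<infinity>x. u x * cnj (Ltilde m b c v x) * complex_of_real (m x)) = ip m u (S (S v))"
      unfolding ip_def LSS[OF vD, symmetric] LLt[OF vD] ..
    also have "\<dots> = assoc_form m S u v"
      unfolding assoc_form_def using sym[OF u] vD Ddef by simp
    finally show "(\<Sum>\<^sub>\<infinity>x. u x * cnj (Ltilde m b c v x) * complex_of_real (m x)) = assoc_form m S u v" .
  qed
qed

theorem mainTheorem5: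
  fixes m :: "'v::countable \<Rightarrow> real" and b :: "'v \<Rightarrow> 'v \<Rightarrow> real" and c :: "'v \<Rightarrow> real"
    and D :: "('v \<Rightarrow> complex) set" and L :: "('v \<Rightarrow> complex) \<Rightarrow> ('v \<Rightarrow> complex)"
    and DS :: "('v \<Rightarrow> complex) set" and S :: "('v \<Rightarrow> complex) \<Rightarrow> ('v \<Rightarrow> complex)"
  assumes m_pos: "\<forall>x. m x > 0"
    and graph: "is_graph b c"
    and fc: "FC m b c"
    and sa: "selfadjoint m D L"
    and nonneg: "nonneg_op m D L"
    and sqrt: "is_sqrt_op m D L DS S"
  shows "condition_C m b c DS (assoc_form m S) \<longleftrightarrow> restriction_of_Ltilde m b c D L"
proof
  assume "condition_C m b c DS (assoc_form m S)"
  then show "restriction_of_Ltilde m b c D L"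
    by (rule condition_C_imp_restriction[OF m_pos graph sqrt])
next
  assume "restriction_of_Ltilde m b c D L"
  then show "condition_C m b c DS (assoc_form m S)"
    by (rule restriction_imp_condition_C[OF m_pos graph fc sa sqrt])
qed

end
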